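(* Let $s\ge r\ge2$, let $Q$ be an $s$-vertex $r$-graph and let $\mathcal P$ be a $Q$-flat hereditary property of $r$-graphs. Then for every $p\ge1$ and every $H\in\mathcal P$ with at least $s$ vertices, $$\lambda^{(p)}(Q,H)\le\pi(Q,\mathcal P)^{1/p}\big(s!\,\mathcal N(Q,H)\big)^{1-1/p}.$$
   Context: An $r$-graph ($r\ge 2$) is a finite hypergraph all of whose edges have exactly $r$ vertices. For $I\subseteq V(H)$, $H[I]$ denotes the induced subhypergraph on $I$. For an $s$-vertex $r$-graph $Q$ and an $r$-graph $H$, $\mathcal N(Q,H)$ is the number of (not necessarily induced) subgraphs of $H$ isomorphic to $Q$. For an $n$-vertex $r$-graph $H$ with vertex set $[n]$ and $\mathbf x\in\mathbb R^n$, $P_{Q,H}(\mathbf x)=s!\sum_{\{i_1,\dots,i_s\}\in\binom{[n]}{s}}\mathcal N(Q,H[\{i_1,\dots,i_s\}])\,x_{i_1}\cdots x_{i_s}$, and for $p\ge1$, $\lambda^{(p)}(Q,H)=\max_{\|\mathbf x\|_p=1}P_{Q,H}(\mathbf x)$. A hereditary property $\mathcal P$ of $r$-graphs is a family of $r$-graphs closed under isomorphism and under taking induced subgraphs; as a standing assumption, whenever $H\in\mathcal P$, the disjoint union of $H$ with an isolated vertex is also in $\mathcal P$. $\mathcal P_n$ is the set of members of $\mathcal P$ with $n$ vertices. $ex(Q,\mathcal P_n)=\max\{\mathcal N(Q,H):H\in\mathcal P_n\}$ and $\pi(Q,\mathcal P)=\lim_{n\to\infty}ex(Q,\mathcal P_n)/\binom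 ns$ (this limit exists). $\lambda^{(p)}(Q,\mathcal P_n)=\max\{\lambda^{(p)}(Q,H):H\in\mathcal P_n\}$ and $\lambda^{(p)}(Q,\mathcal P)=\lim_{n\to\infty}\lambda^{(p)}(Q,\mathcal P_n)n^{s/p-s}$ (this limit exists). $\mathcal P$ is $Q$-flat if $\lambda^{(1)}(Q,\mathcal P)=\pi(Q,\mathcal P)$. *)

theory Defs
  imports Complex_Main
begin

text \<open>Hypergraphs with vertices in nat: a pair (vertex set, edge set).
Every finite hypergraph is isomorphic to one of this form.\<close>
type_synonym hg = "nat set \<times> nat set set"

definition verts :: "hg \<Rightarrow> nat set" where "verts H = fst H"
definition edges :: "hg \<Rightarrow> nat set set" where "edges H = snd H"

definition rgraph :: "nat \<Rightarrow> hg \<Rightarrow> bool" where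
  "rgraph r H \<longleftrightarrow> finite (verts H) \<and> (\<forall>e\<in>edges H. e \<subseteq> verts H \<and> card e = r)"

definition hg_iso :: "hg \<Rightarrow> hg \<Rightarrow> bool" where
  "hg_iso G H \<longleftrightarrow> (\<exists>f. bij_betw f (verts G) (verts H) \<and>
      (\<forall>e. e \<subseteq> verts G \<longrightarrow> (e \<in> edges G \<longleftrightarrow> f ` e \<in> edges H)))"

definition induced :: "hg \<Rightarrow> nat set \<Rightarrow> hg" where
  "induced H I = (I, {e \<in> edges H. e \<subseteq> I})"

definition copies :: "hg \<Rightarrow> hg \<Rightarrow> nat" where
  "copies Q H = card {(W, F). W \<subseteq> verts H \<and> F \<subseteq> edges H \<and> (\<forall>e\<in>F. e \<subseteq> W)
                              \<and> hg_iso (W, F) Q}"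

definition polyQ :: "hg \<Rightarrow> hg \<Rightarrow> (nat \<Rightarrow> real) \<Rightarrow> real" where
  "polyQ Q H x = fact (card (verts Q)) *
     (\<Sum>I\<in>{I. I \<subseteq> verts H \<and> card I = card (verts Q)}.
        real (copies Q (induced H I)) * (\<Prod>i\<in>I. x i))"

definition lagr :: "real \<Rightarrow> hg \<Rightarrow> hg \<Rightarrow> real" where
  "lagr p Q H = Sup {polyQ Q H x | x. (\<Sum>i\<in>verts H. \<bar>x i\<bar> powr p) powr (1 / p) = 1}"

definition hereditary :: "nat \<Rightarrow> hg set \<Rightarrow> bool" where
  "hereditary r P \<longleftrightarrow>
     (\<forall>H\<in>P. rgraph r H) \<and>
     (\<forall>G H. H \<in> P \<longrightarrow> rgraph r G \<longrightarrow> hg_iso G H \<longrightarrow> G \<in> P) \<and>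
     (\<forall>H\<in>P. \<forall>I. I \<subseteq> verts H \<longrightarrow> induced H I \<in> P) \<and>
     (\<forall>H\<in>P. \<forall>v. v \<notin> verts H \<longrightarrow> (insert v (verts H), edges H) \<in> P)"

definition Pn :: "hg set \<Rightarrow> nat \<Rightarrow> hg set" where
  "Pn P n = {H \<in> P. card (verts H) = n}"

definition exQ :: "hg \<Rightarrow> hg set \<Rightarrow> nat \<Rightarrow> real" where
  "exQ Q P n = Sup ((\<lambda>H. real (copies Q H)) ` Pn P n)"

definition piQ :: "hg \<Rightarrow> hg set \<Rightarrow> real" where
  "piQ Q P = lim (\<lambda>n. exQ Q P n / real (n choose card (verts Q)))"

definition lagrPn :: "real \<Rightarrow> hg \<Rightarrow> hg set \<Rightarrow> nat \<Rightarrow> real" where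
  "lagrPn p Q P n = Sup (lagr p Q ` Pn P n)"

definition lagrP :: "real \<Rightarrow> hg \<Rightarrow> hg set \<Rightarrow> real" where
  "lagrP p Q P = lim (\<lambda>n. lagrPn p Q P n *
      real n powr (real (card (verts Q)) / p - real (card (verts Q))))"

definition flat :: "hg \<Rightarrow> hg set \<Rightarrow> bool" where
  "flat Q P \<longleftrightarrow> lagrP 1 Q P = piQ Q P"

end

(*
  For p = 1 the bound reads lambda^(1)(Q,H) <= pi(Q,P). Giving weight 0 to an added isolated
  vertex shows that lambda^(1)(Q,P_n) is nondecreasing in n; it is also bounded, so it stays
  below its limit lambda^(1)(Q,P), which equals pi(Q,P) by flatness.

  For general p, P_{Q,H}(x) <= sum_I c_I a_I with c_I = s! N(Q,H[I]) and a_I = prod_{i in I} |x_i|.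
  Hoelder's inequality with weights c_I bounds this by
  (sum_I c_I a_I^p)^(1/p) (sum_I c_I)^(1-1/p). The first sum is P_{Q,H}(|x|^p) with |x|^p on the
  l1-sphere, hence at most lambda^(1)(Q,H) <= pi(Q,P); the second is at most s! N(Q,H), because
  a copy of Q inside H[I] has vertex set exactly I.
*)
theory Submission
  imports Defs "HOL-Analysis.Convex"
begin

definition copy_set :: "hg \<Rightarrow> hg \<Rightarrow> hg set" where
  "copy_set Q H = {(W, F). W \<subseteq> verts H \<and> F \<subseteq> edges H \<and> (\<forall>e\<in>F. e \<subseteq> W) \<and> hg_iso (W, F) Q}"

lemma copies_eq_card_copy_set: "copies Q H = card (copy_set Q H)"
  unfolding copies_def copy_set_def ..

lemma hg_iso_card_verts:
  assumes "hg_iso G Q" "finite (verts Q)"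
  shows "finite (verts G) \<and> card (verts G) = card (verts Q)"
proof -
  obtain f where "bij_betw f (verts G) (verts Q)" using assms(1) unfolding hg_iso_def by auto
  then show ?thesis using assms(2) bij_betw_finite bij_betw_same_card by blast
qed

lemma copy_set_induced:
  assumes "finite (verts Q)" "finite I" "I \<subseteq> verts H" "card I = card (verts Q)"
  shows "copy_set Q (induced H I) = {(W, F) \<in> copy_set Q H. W = I}"
proof (intro equalityI subsetI)
  fix z assume z: "z \<in> copy_set Q (induced H I)"
  then obtain W F where WF: "z = (W, F)" "W \<subseteq> I" "hg_iso (W, F) Q"
    unfolding copy_set_def induced_def verts_def by auto
  then have "W = I"
    using hg_iso_card_verts[OF WF(3) assms(1)] assms(2,4) by (simp add: verts_def card_subset_eq)
  then show "z \<in> {(W, F) \<in> copy_set Q H. W = I}"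
    using z WF(1) assms(3) unfolding copy_set_def induced_def verts_def edges_def by auto
qed (auto simp: copy_set_def induced_def verts_def edges_def)

lemma finite_copy_set:
  assumes "rgraph r H"
  shows "finite (copy_set Q H)"
proof -
  have "finite (verts H)" "edges H \<subseteq> Pow (verts H)" using assms unfolding rgraph_def by auto
  moreover have "copy_set Q H \<subseteq> Pow (verts H) \<times> Pow (edges H)" unfolding copy_set_def by auto
  ultimately show ?thesis by (meson finite_Pow_iff finite_SigmaI finite_subset)
qed

text \<open>A copy of \<open>Q\<close> inside \<open>H[I]\<close> has vertex set exactly \<open>I\<close>, so different \<open>I\<close> contribute
  disjoint sets of copies.\<close>
lemma sum_copies_induced_le:
  assumes "rgraph r H" "finite (verts Q)"
  shows "(\<Sum>I | I \<subseteq> verts H \<and> card I = card (verts Q). copies Q (induced H I)) \<le> copies Q H"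
proof -
  let ?S = "{I. I \<subseteq> verts H \<and> card I = card (verts Q)}"
  let ?C = "\<lambda>I. {(W, F) \<in> copy_set Q H. W = I}"
  have fin: "finite (verts H)" "finite (copy_set Q H)"
    using assms(1) finite_copy_set[OF assms(1)] by (auto simp: rgraph_def)
  have "(\<Sum>I\<in>?S. copies Q (induced H I)) = (\<Sum>I\<in>?S. card (?C I))"
  proof (rule sum.cong)
    fix I assume "I \<in> ?S"
    then show "copies Q (induced H I) = card (?C I)"
      using copy_set_induced[OF assms(2), of I H] finite_subset[OF _ fin(1)]
      by (simp add: copies_eq_card_copy_set)
  qed simp
  also have "\<dots> = card (\<Union>I\<in>?S. ?C I)"
    using fin by (intro card_UN_disjoint[symmetric]) (auto intro: finite_subset)
  also have "\<dots> \<le> card (copy_set Q H)"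
    using fin by (intro card_mono) auto
  finally show ?thesis by (simp add: copies_eq_card_copy_set)
qed

lemma copies_induced_le:
  assumes "finite I"
  shows "copies Q (induced H I) \<le> 2 ^ card I * 2 ^ 2 ^ card I"
proof -
  have "copy_set Q (induced H I) \<subseteq> Pow I \<times> Pow (Pow I)"
    unfolding copy_set_def induced_def verts_def edges_def by auto
  then have "card (copy_set Q (induced H I)) \<le> card (Pow I \<times> Pow (Pow I))"
    using assms by (intro card_mono) auto
  then show ?thesis using assms by (simp add: copies_eq_card_copy_set card_Pow card_cartesian_product)
qed

lemma weighted_geometric_le_arithmetic:
  fixes x y \<alpha> :: real
  assumes "0 \<le> x" "0 < y" "0 < \<alpha>" "\<alpha> \<le> 1"
  shows "x powr \<alpha> * y powr (1 - \<alpha>) \<le> \<alpha> * x + (1 - \<alpha>) * y"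
proof (cases "x = 0")
  case False
  then show ?thesis using Youngs_inequality_0[of \<alpha> "1 - \<alpha>" x y] assms by simp
qed (use assms in simp)

lemma Hoelder_weighted_sum:
  fixes c a :: "'a \<Rightarrow> real"
  assumes "finite S" "\<And>i. i \<in> S \<Longrightarrow> 0 \<le> c i" "\<And>i. i \<in> S \<Longrightarrow> 0 \<le> a i" "1 \<le> p"
  shows "(\<Sum>i\<in>S. c i * a i) \<le> (\<Sum>i\<in>S. c i * a i powr p) powr (1 / p) * (\<Sum>i\<in>S. c i) powr (1 - 1 / p)"
proof (cases "\<forall>i\<in>S. c i * a i = 0")
  case True
  then have "(\<Sum>i\<in>S. c i * a i) = 0" by (intro sum.neutral) blast
  then show ?thesis by simp
next
  case False
  define A where "A = (\<Sum>i\<in>S. c i * a i powr p)"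
  define C where "C = (\<Sum>i\<in>S. c i)"
  define M where "M = A powr (1 / p) * C powr (1 - 1 / p)"
  from False obtain j where "j \<in> S" "c j * a j \<noteq> 0" by blast
  with assms(2,3) have j: "j \<in> S" "0 < c j" "0 < a j" by (auto simp: less_le)
  have "0 < c j * a j powr p" using j by simp
  also have "\<dots> \<le> A"
    unfolding A_def using assms j by (intro member_le_sum) auto
  finally have A: "0 < A" .
  have "0 < c j" by (rule j(2))
  also have "\<dots> \<le> C"
    unfolding C_def using assms j by (intro member_le_sum) auto
  finally have C: "0 < C" .
  have M: "0 < M" unfolding M_def using A C by simp
  txt \<open>Weighted AM-GM applied to \<open>a i powr p / A\<close> and \<open>1 / C\<close>, then summed with weights \<open>c i\<close>.\<close>
  have term_le: "a i \<le> M * (1 / p * (a i powr p / A) + (1 - 1 / p) * (1 / C))" if "i \<in> S" for i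
  proof -
    have "(a i powr p / A) powr (1 / p) = a i / A powr (1 / p)"
      using assms(3)[OF that] assms(4) A by (simp add: powr_divide powr_powr)
    moreover have "(1 / C) powr (1 - 1 / p) = 1 / C powr (1 - 1 / p)"
      using C by (simp add: powr_divide)
    ultimately have "a i = M * ((a i powr p / A) powr (1 / p) * (1 / C) powr (1 - 1 / p))"
      using A C by (simp add: M_def)
    also have "\<dots> \<le> M * (1 / p * (a i powr p / A) + (1 - 1 / p) * (1 / C))"
      using M A C assms(4) by (intro mult_left_mono weighted_geometric_le_arithmetic) auto
    finally show ?thesis .
  qed
  have "(\<Sum>i\<in>S. c i * a i) \<le> (\<Sum>i\<in>S. c i * (M * (1 / p * (a i powr p / A) + (1 - 1 / p) * (1 / C))))"
    using term_le assms(2) by (intro sum_mono mult_left_mono) auto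
  also have "\<dots> = (\<Sum>i\<in>S. M / (p * A) * (c i * a i powr p) + M * (1 - 1 / p) / C * c i)"
    using A C assms(4) by (intro sum.cong) (simp_all add: field_simps)
  also have "\<dots> = M / (p * A) * A + M * (1 - 1 / p) / C * C"
    unfolding A_def C_def by (simp add: sum.distrib sum_distrib_left)
  also have "\<dots> = M" using A C assms(4) by (simp add: field_simps)
  finally show ?thesis unfolding M_def A_def C_def .
qed

definition lp_sphere :: "real \<Rightarrow> nat set \<Rightarrow> (nat \<Rightarrow> real) set" where
  "lp_sphere p V = {x. (\<Sum>i\<in>V. \<bar>x i\<bar> powr p) powr (1 / p) = 1}"

lemma lagr_eq_Sup_lp_sphere: "lagr p Q G = Sup (polyQ Q G ` lp_sphere p (verts G))"
  unfolding lagr_def lp_sphere_def by (intro arg_cong[where f = Sup]) blast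

lemma mem_lp_sphere_iff:
  assumes "0 < p"
  shows "x \<in> lp_sphere p V \<longleftrightarrow> (\<Sum>i\<in>V. \<bar>x i\<bar> powr p) = 1"
proof -
  have "0 \<le> (\<Sum>i\<in>V. \<bar>x i\<bar> powr p)" by (simp add: sum_nonneg)
  then show ?thesis
    using assms unfolding lp_sphere_def
    by (auto simp: powr_powr dest: arg_cong[where f = "\<lambda>t. t powr p"])
qed

lemma lp_sphere_nonempty:
  assumes "0 < p" "finite V" "V \<noteq> {}"
  shows "lp_sphere p V \<noteq> {}"
proof -
  obtain v where v: "v \<in> V" using assms(3) by blast
  have "(\<Sum>i\<in>V. \<bar>if i = v then 1 else 0\<bar> powr p) = (\<Sum>i\<in>V. if i = v then 1 else 0 :: real)"
    by (intro sum.cong) auto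
  then have "(\<lambda>i. if i = v then 1 else 0) \<in> lp_sphere p V"
    using assms v by (simp add: mem_lp_sphere_iff)
  then show ?thesis by blast
qed

lemma polyQ_le_polyQ_abs: "polyQ Q G x \<le> polyQ Q G (\<lambda>i. \<bar>x i\<bar>)"
  unfolding polyQ_def
  by (intro mult_left_mono sum_mono) (auto simp flip: abs_prod intro: mult_left_mono)

lemma sum_Pow_prod_le_exp_sum:
  fixes x :: "'a \<Rightarrow> real"
  assumes "finite V" "\<And>i. i \<in> V \<Longrightarrow> 0 \<le> x i"
  shows "(\<Sum>I\<in>Pow V. \<Prod>i\<in>I. x i) \<le> exp (\<Sum>i\<in>V. x i)"
proof -
  have "(\<Sum>I\<in>Pow V. \<Prod>i\<in>I. x i) = (\<Sum>I\<in>Pow V. (\<Prod>i\<in>I. x i) * (\<Prod>i\<in>V - I. 1))"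
    by simp
  also have "\<dots> = (\<Prod>i\<in>V. x i + 1)"
    by (rule prod_add[OF assms(1), symmetric])
  also have "\<dots> \<le> (\<Prod>i\<in>V. exp (x i))"
    using assms(2) by (intro prod_mono) (auto simp: add.commute exp_ge_add_one_self)
  also have "\<dots> = exp (\<Sum>i\<in>V. x i)"
    using assms(1) by (simp add: exp_sum)
  finally show ?thesis .
qed

text \<open>A crude bound, uniform in the host graph; only its existence matters.\<close>
definition lagr1_bound :: "nat \<Rightarrow> real" where
  "lagr1_bound s = fact s * 2 ^ s * 2 ^ 2 ^ s * exp 1"

lemma polyQ_le_lagr1_bound:
  assumes "finite (verts G)" "x \<in> lp_sphere 1 (verts G)"
  shows "polyQ Q G x \<le> lagr1_bound (card (verts Q))"
proof -
  let ?s = "card (verts Q)"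
  let ?K = "(2::real) ^ ?s * 2 ^ 2 ^ ?s"
  have "polyQ Q G x \<le> fact ?s *
      (\<Sum>I | I \<subseteq> verts G \<and> card I = ?s. real (copies Q (induced G I)) * (\<Prod>i\<in>I. \<bar>x i\<bar>))"
    using polyQ_le_polyQ_abs[of Q G x] unfolding polyQ_def .
  also have "\<dots> \<le> fact ?s * (\<Sum>I | I \<subseteq> verts G \<and> card I = ?s. ?K * (\<Prod>i\<in>I. \<bar>x i\<bar>))"
  proof (intro mult_left_mono sum_mono mult_right_mono)
    fix I assume "I \<in> {I. I \<subseteq> verts G \<and> card I = ?s}"
    then have "finite I" "card I = ?s" using assms(1) finite_subset by auto
    then have "copies Q (induced G I) \<le> 2 ^ ?s * 2 ^ 2 ^ ?s"
      using copies_induced_le[of I Q G] by simp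
    then have "real (copies Q (induced G I)) \<le> real (2 ^ ?s * 2 ^ 2 ^ ?s)"
      by (simp only: of_nat_le_iff)
    then show "real (copies Q (induced G I)) \<le> ?K" by simp
  qed (auto simp: prod_nonneg)
  also have "\<dots> \<le> fact ?s * (\<Sum>I\<in>Pow (verts G). ?K * (\<Prod>i\<in>I. \<bar>x i\<bar>))"
    using assms(1) by (intro mult_left_mono sum_mono2) (auto simp: prod_nonneg)
  also have "\<dots> = fact ?s * ?K * (\<Sum>I\<in>Pow (verts G). \<Prod>i\<in>I. \<bar>x i\<bar>)"
    by (simp add: sum_distrib_left mult.assoc)
  also have "\<dots> \<le> fact ?s * ?K * exp (\<Sum>i\<in>verts G. \<bar>x i\<bar>)"
    using assms(1) by (intro mult_left_mono sum_Pow_prod_le_exp_sum) auto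
  also have "\<dots> = lagr1_bound ?s"
    using assms(2) by (simp add: mem_lp_sphere_iff lagr1_bound_def)
  finally show ?thesis .
qed

lemma bdd_above_polyQ_lp_sphere_1:
  assumes "finite (verts G)"
  shows "bdd_above (polyQ Q G ` lp_sphere 1 (verts G))"
  using polyQ_le_lagr1_bound[OF assms] by (intro bdd_aboveI2) blast

lemma polyQ_le_lagr1:
  assumes "finite (verts G)" "x \<in> lp_sphere 1 (verts G)"
  shows "polyQ Q G x \<le> lagr 1 Q G"
  unfolding lagr_eq_Sup_lp_sphere
  using assms by (intro cSup_upper imageI bdd_above_polyQ_lp_sphere_1)

lemma lagr1_le_bound:
  assumes "finite (verts G)" "verts G \<noteq> {}"
  shows "lagr 1 Q G \<le> lagr1_bound (card (verts Q))"
  unfolding lagr_eq_Sup_lp_sphere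
proof (rule cSup_least)
  show "polyQ Q G ` lp_sphere 1 (verts G) \<noteq> {}"
    using lp_sphere_nonempty[of 1 "verts G"] assms by simp
qed (use polyQ_le_lagr1_bound[OF assms(1)] in blast)

lemma polyQ_add_isolated_vertex:
  assumes "finite (verts G)" "v \<notin> verts G" "1 \<le> card (verts Q)"
  shows "polyQ Q (insert v (verts G), edges G) (x(v := 0)) = polyQ Q G x"
proof -
  let ?G' = "(insert v (verts G), edges G)"
  let ?t = "\<lambda>G y I. real (copies Q (induced G I)) * (\<Prod>i\<in>I. y i)"
  let ?S = "{I. I \<subseteq> verts G \<and> card I = card (verts Q)}"
  let ?S' = "{I. I \<subseteq> insert v (verts G) \<and> card I = card (verts Q)}"
  have fin: "finite ?S'"
    by (rule finite_subset[of _ "Pow (insert v (verts G))"]) (use assms(1) in auto)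
  have zero: "?t ?G' (x(v := 0)) I = 0" if "I \<in> ?S' - ?S" for I
  proof -
    have "v \<in> I" "finite I"
      using that assms(3) by (auto intro: card_ge_0_finite)
    then have "(\<Prod>i\<in>I. (x(v := 0)) i) = 0" by (intro prod_zero) auto
    then show ?thesis by simp
  qed
  have "(\<Sum>I\<in>?S'. ?t ?G' (x(v := 0)) I) = (\<Sum>I\<in>?S. ?t ?G' (x(v := 0)) I)"
    by (rule sum.mono_neutral_right[OF fin]) (use zero in blast)+
  also have "\<dots> = (\<Sum>I\<in>?S. ?t G x I)"
  proof (rule sum.cong)
    fix I assume "I \<in> ?S"
    then have "v \<notin> I" using assms(2) by auto
    then have "(\<Prod>i\<in>I. (x(v := 0)) i) = (\<Prod>i\<in>I. x i)" by (intro prod.cong) auto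
    moreover have "induced ?G' I = induced G I" by (simp add: induced_def edges_def)
    ultimately show "?t ?G' (x(v := 0)) I = ?t G x I" by simp
  qed simp
  finally show ?thesis unfolding polyQ_def by (simp add: verts_def edges_def)
qed

lemma lagr1_le_lagr1_add_isolated_vertex:
  assumes "finite (verts G)" "verts G \<noteq> {}" "v \<notin> verts G" "1 \<le> card (verts Q)"
  shows "lagr 1 Q G \<le> lagr 1 Q (insert v (verts G), edges G)"
  unfolding lagr_eq_Sup_lp_sphere[of 1 Q G]
proof (rule cSup_least)
  show "polyQ Q G ` lp_sphere 1 (verts G) \<noteq> {}"
    using assms(1,2) lp_sphere_nonempty[of 1 "verts G"] by simp
next
  let ?G' = "(insert v (verts G), edges G)"
  fix z assume "z \<in> polyQ Q G ` lp_sphere 1 (verts G)"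
  then obtain x where z: "z = polyQ Q G x" and x: "x \<in> lp_sphere 1 (verts G)" by blast
  have "(\<Sum>i\<in>insert v (verts G). \<bar>(x(v := 0)) i\<bar>) = (\<Sum>i\<in>verts G. \<bar>x i\<bar>)"
    using assms(1,3) by (simp add: sum.insert) (intro sum.cong, auto)
  then have "x(v := 0) \<in> lp_sphere 1 (verts ?G')"
    using x by (simp add: mem_lp_sphere_iff verts_def)
  then have "polyQ Q ?G' (x(v := 0)) \<le> lagr 1 Q ?G'"
    using assms(1) by (intro polyQ_le_lagr1) (simp_all add: verts_def)
  then show "z \<le> lagr 1 Q ?G'"
    using polyQ_add_isolated_vertex[OF assms(1,3,4)] z by simp
qed

lemma hereditary_rgraph: "hereditary r P \<Longrightarrow> G \<in> P \<Longrightarrow> rgraph r G"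
  unfolding hereditary_def by blast

lemma hereditary_add_isolated_vertex:
  "hereditary r P \<Longrightarrow> G \<in> P \<Longrightarrow> v \<notin> verts G \<Longrightarrow> (insert v (verts G), edges G) \<in> P"
  unfolding hereditary_def by blast

lemma hereditary_finite_verts: "hereditary r P \<Longrightarrow> G \<in> P \<Longrightarrow> finite (verts G)"
  using hereditary_rgraph unfolding rgraph_def by blast

lemma hereditary_add_fresh_vertex:
  assumes "hereditary r P" "G \<in> Pn P n"
  obtains v where "v \<notin> verts G" "(insert v (verts G), edges G) \<in> Pn P (Suc n)"
proof -
  have G: "G \<in> P" "card (verts G) = n" using assms(2) unfolding Pn_def by auto
  then have fin: "finite (verts G)" using hereditary_finite_verts[OF assms(1)] by blast
  obtain v where v: "v \<notin> verts G" using ex_new_if_finite[OF infinite_UNIV_nat fin] by blast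
  have "(insert v (verts G), edges G) \<in> Pn P (Suc n)"
    using hereditary_add_isolated_vertex[OF assms(1) G(1) v] fin v G(2) by (simp add: Pn_def verts_def)
  with v show ?thesis by (rule that)
qed

lemma Pn_nonempty:
  assumes "hereditary r P" "H \<in> P" "card (verts H) \<le> n"
  shows "Pn P n \<noteq> {}"
  using assms(3)
proof (induction n rule: dec_induct)
  case base
  then show ?case using assms(2) unfolding Pn_def by blast
next
  case (step n)
  then show ?case using hereditary_add_fresh_vertex[OF assms(1)] by blast
qed

lemma lagr1_le_bound_Pn:
  assumes "hereditary r P" "G \<in> Pn P n" "1 \<le> n"
  shows "lagr 1 Q G \<le> lagr1_bound (card (verts Q))"
proof (rule lagr1_le_bound)
  have "G \<in> P" "card (verts G) = n" using assms(2) unfolding Pn_def by auto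
  then show "finite (verts G)" "verts G \<noteq> {}"
    using hereditary_finite_verts[OF assms(1)] assms(3) by auto
qed

lemma lagr1_le_lagrPn1:
  assumes "hereditary r P" "G \<in> Pn P n" "1 \<le> n"
  shows "lagr 1 Q G \<le> lagrPn 1 Q P n"
  unfolding lagrPn_def
proof (rule cSup_upper)
  show "lagr 1 Q G \<in> lagr 1 Q ` Pn P n" using assms(2) by (rule imageI)
  show "bdd_above (lagr 1 Q ` Pn P n)"
    using lagr1_le_bound_Pn[OF assms(1) _ assms(3)] by (rule bdd_aboveI2)
qed

lemma lagrPn1_le_bound:
  assumes "hereditary r P" "Pn P n \<noteq> {}" "1 \<le> n"
  shows "lagrPn 1 Q P n \<le> lagr1_bound (card (verts Q))"
  unfolding lagrPn_def
  using assms(2) lagr1_le_bound_Pn[OF assms(1) _ assms(3)] by (intro cSup_least) blast+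

lemma lagrPn1_le_lagrPn1_Suc:
  assumes "hereditary r P" "Pn P n \<noteq> {}" "1 \<le> n" "1 \<le> card (verts Q)"
  shows "lagrPn 1 Q P n \<le> lagrPn 1 Q P (Suc n)"
  unfolding lagrPn_def[of 1 Q P n]
proof (rule cSup_least)
  show "lagr 1 Q ` Pn P n \<noteq> {}" using assms(2) by blast
next
  fix z assume "z \<in> lagr 1 Q ` Pn P n"
  then obtain G where G: "G \<in> Pn P n" "z = lagr 1 Q G" by blast
  obtain v where v: "v \<notin> verts G" and G': "(insert v (verts G), edges G) \<in> Pn P (Suc n)"
    using hereditary_add_fresh_vertex[OF assms(1) G(1)] .
  have "finite (verts G)" "verts G \<noteq> {}"
    using G(1) assms(3) hereditary_finite_verts[OF assms(1)] by (auto simp: Pn_def)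
  then have "z \<le> lagr 1 Q (insert v (verts G), edges G)"
    using lagr1_le_lagr1_add_isolated_vertex[OF _ _ v assms(4)] G(2) by blast
  also have "\<dots> \<le> lagrPn 1 Q P (Suc n)"
    using lagr1_le_lagrPn1[OF assms(1) G'] by simp
  finally show "z \<le> lagrPn 1 Q P (Suc n)" .
qed

text \<open>The bound is essential: \<^const>\<open>lim\<close> of a divergent sequence is an unspecified value.\<close>
lemma le_lim_if_eventually_mono_bounded:
  fixes f :: "nat \<Rightarrow> real"
  assumes "\<And>n. N \<le> n \<Longrightarrow> f n \<le> f (Suc n)" "\<And>n. N \<le> n \<Longrightarrow> f n \<le> B"
  shows "f N \<le> lim f"
proof -
  have "incseq (\<lambda>k. f (k + N))" using assms(1) by (intro incseq_SucI) simp
  moreover have "\<forall>k. f (k + N) \<le> B" using assms(2) by simp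
  ultimately obtain L where L: "(\<lambda>k. f (k + N)) \<longlonglongrightarrow> L" "\<forall>k. f (k + N) \<le> L"
    by (rule incseq_convergent)
  have "lim f = L" using LIMSEQ_offset[OF L(1)] by (rule limI)
  then show ?thesis using spec[OF L(2), of 0] by simp
qed

lemma lagr1_le_lagrP1:
  assumes "hereditary r P" "H \<in> P" "verts H \<noteq> {}" "1 \<le> card (verts Q)"
  shows "lagr 1 Q H \<le> lagrP 1 Q P"
proof -
  define N where "N = card (verts H)"
  have N: "1 \<le> N"
    using assms(2,3) hereditary_finite_verts[OF assms(1)] by (simp add: N_def Suc_le_eq card_gt_0_iff)
  define f where
    "f n = lagrPn 1 Q P n * real n powr (real (card (verts Q)) / 1 - real (card (verts Q)))" for n
  txt \<open>The normalising factor is \<open>n powr 0\<close>, which is \<open>1\<close> only for \<open>n \<noteq> 0\<close>.\<close>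
  have f: "f n = lagrPn 1 Q P n" if "1 \<le> n" for n
    using that by (simp add: f_def)
  have ne: "Pn P n \<noteq> {}" if "N \<le> n" for n
    using Pn_nonempty[OF assms(1,2)] that by (simp add: N_def)
  have "lagr 1 Q H \<le> lagrPn 1 Q P N"
    using lagr1_le_lagrPn1[OF assms(1) _ N] assms(2) by (simp add: Pn_def N_def)
  also have "\<dots> = f N" using f[OF N] by simp
  also have "\<dots> \<le> lim f"
  proof (rule le_lim_if_eventually_mono_bounded)
    fix n assume "N \<le> n"
    then have "Pn P n \<noteq> {}" "1 \<le> n" using ne N by auto
    then show "f n \<le> f (Suc n)" "f n \<le> lagr1_bound (card (verts Q))"
      using lagrPn1_le_lagrPn1_Suc[OF assms(1) _ _ assms(4)] lagrPn1_le_bound[OF assms(1)] f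
      by simp_all
  qed
  finally show ?thesis unfolding lagrP_def f_def .
qed

lemma polyQ_le_of_lagr1_le:
  assumes "rgraph r H" "finite (verts Q)" "1 \<le> p" "lagr 1 Q H \<le> B"
    and x: "x \<in> lp_sphere p (verts H)"
  shows "polyQ Q H x \<le> B powr (1 / p) * (fact (card (verts Q)) * real (copies Q H)) powr (1 - 1 / p)"
proof -
  let ?s = "card (verts Q)"
  let ?S = "{I. I \<subseteq> verts H \<and> card I = ?s}"
  define c where "c I = fact ?s * real (copies Q (induced H I))" for I
  define a where "a I = (\<Prod>i\<in>I. \<bar>x i\<bar>)" for I
  have fin: "finite (verts H)" using assms(1) by (simp add: rgraph_def)
  have "finite ?S" by (rule finite_subset[of _ "Pow (verts H)"]) (use fin in auto)
  have "polyQ Q H x \<le> polyQ Q H (\<lambda>i. \<bar>x i\<bar>)" by (rule polyQ_le_polyQ_abs)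
  also have "\<dots> = (\<Sum>I\<in>?S. c I * a I)"
    unfolding polyQ_def c_def a_def by (simp add: sum_distrib_left mult.assoc)
  also have "\<dots> \<le> (\<Sum>I\<in>?S. c I * a I powr p) powr (1 / p) * (\<Sum>I\<in>?S. c I) powr (1 - 1 / p)"
    using \<open>finite ?S\<close> assms(3) by (intro Hoelder_weighted_sum) (auto simp: c_def a_def prod_nonneg)
  also have "\<dots> \<le> B powr (1 / p) * (fact ?s * real (copies Q H)) powr (1 - 1 / p)"
  proof (rule mult_mono)
    have "(\<Sum>I\<in>?S. c I * a I powr p) = polyQ Q H (\<lambda>i. \<bar>x i\<bar> powr p)"
      unfolding polyQ_def c_def a_def by (simp add: sum_distrib_left mult.assoc prod_powr_distrib)
    also have "\<dots> \<le> lagr 1 Q H"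
      using x assms(3) by (intro polyQ_le_lagr1[OF fin]) (simp add: mem_lp_sphere_iff)
    finally show "(\<Sum>I\<in>?S. c I * a I powr p) powr (1 / p) \<le> B powr (1 / p)"
      using assms(3,4) by (intro powr_mono2) (auto simp: c_def a_def sum_nonneg prod_nonneg)
  next
    have "(\<Sum>I\<in>?S. c I) = fact ?s * real (\<Sum>I\<in>?S. copies Q (induced H I))"
      by (simp add: c_def sum_distrib_left)
    also have "\<dots> \<le> fact ?s * real (copies Q H)"
      by (intro mult_left_mono of_nat_mono sum_copies_induced_le[OF assms(1,2)]) simp
    finally show "(\<Sum>I\<in>?S. c I) powr (1 - 1 / p) \<le> (fact ?s * real (copies Q H)) powr (1 - 1 / p)"
      using assms(3) by (intro powr_mono2) (auto simp: c_def sum_nonneg)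
  qed (simp_all add: powr_ge_zero)
  finally show ?thesis .
qed

lemma lagr_le_of_lagr1_le:
  assumes "rgraph r H" "verts H \<noteq> {}" "finite (verts Q)" "1 \<le> p" "lagr 1 Q H \<le> B"
  shows "lagr p Q H \<le> B powr (1 / p) * (fact (card (verts Q)) * real (copies Q H)) powr (1 - 1 / p)"
  unfolding lagr_eq_Sup_lp_sphere[of p]
proof (rule cSup_least)
  have "finite (verts H)" using assms(1) by (simp add: rgraph_def)
  then show "polyQ Q H ` lp_sphere p (verts H) \<noteq> {}"
    using lp_sphere_nonempty[of p "verts H"] assms(2,4) by simp
qed (use polyQ_le_of_lagr1_le[OF assms(1,3,4,5)] in blast)

theorem lemma3p13:
  fixes r s :: nat and Q :: hg and P :: "hg set" and p :: real and H :: hg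
  assumes "2 \<le> r" and "r \<le> s"
    and "rgraph r Q" and "card (verts Q) = s"
    and "hereditary r P" and "flat Q P"
    and "1 \<le> p"
    and "H \<in> P" and "s \<le> card (verts H)"
  shows "lagr p Q H \<le> piQ Q P powr (1 / p) * (fact s * real (copies Q H)) powr (1 - 1 / p)"
proof -
  have H: "rgraph r H" using hereditary_rgraph[OF assms(5,8)] .
  have ne: "verts H \<noteq> {}" using assms(1,2,9) by auto
  have Q: "finite (verts Q)" using assms(3) by (simp add: rgraph_def)
  have "lagr 1 Q H \<le> piQ Q P"
    using lagr1_le_lagrP1[OF assms(5,8) ne, of Q] assms(1,2,4,6) by (simp add: flat_def)
  from lagr_le_of_lagr1_le[OF H ne Q assms(7) this] show ?thesis by (simp add: assms(4))
qed

end
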